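(* Let $\mathfrak{M}=\{M^{(\alpha)}:\alpha>0\}$ be a non-quasianalytic weight matrix such that $\mu^{(\alpha)}\le\mu^{(\beta)}$ termwise whenever $\alpha\le\beta$, \[ \forall\alpha>0\ \exists\beta>0:\ \liminf_{k\to\infty}\frac{\mu^{(\beta)}_k}{k}\sum_{j\ge2k}\frac1{\mu^{(\alpha)}_j}>0, \] and \[ \forall\alpha>0\ \exists\beta>0\ \exists A\ge1\ \forall j\in\mathbb{N}:\ (\mu^{(\alpha)}_j)^2\le A\mu^{(\beta)}_{2j}. \] Then (i) $\forall\alpha>0\ \exists\beta>0:\ \liminf_{k\to\infty}\frac{\mu^{(\beta)}_k}{k}\sum_{j\ge k}\frac1{\mu^{(\alpha)}_j}>0$, and (ii) $\forall\alpha>0\ \exists\beta>0\ \exists A\ge1\ \forall j\in\mathbb{N}_{\ge1}:\ \sigma^{(\alpha)}_j\le A(S^{(\beta)}_j)^{1/j}$.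
   Context: A weight sequence is $M=(M_k)_{k\ge0}$ with $M_k=\mu_0\cdots\mu_k$, $1=\mu_0\le\mu_1\le\cdots$, $\mu_k\to\infty$; non-quasianalytic if $\sum1/\mu_k<\infty$; $\mu^{(\alpha)}_k=M^{(\alpha)}_k/M^{(\alpha)}_{k-1}$. A weight matrix is a family $\{M^{(\alpha)}:\alpha>0\}$ of weight sequences with $M^{(\alpha)}\le M^{(\beta)}$ for $\alpha\le\beta$; non-quasianalytic if all members are. The derived sequences: $S^{(\alpha)}_k=\sigma^{(\alpha)}_0\cdots\sigma^{(\alpha)}_k$ with $\sigma^{(\alpha)}_0=1$, $\sigma^{(\alpha)}_k=\tau^{(\alpha)}_1k/\tau^{(\alpha)}_k$ and $\tau^{(\alpha)}_k=k/\mu^{(\alpha)}_k+\sum_{\ell\ge k}1/\mu^{(\alpha)}_\ell$ for $k\ge1$. *)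

theory Defs
  imports "HOL-Analysis.Analysis"
begin

definition mu :: "(nat \<Rightarrow> real) \<Rightarrow> nat \<Rightarrow> real" where
  "mu M k = (if k = 0 then M 0 else M k / M (k - 1))"

definition weight_sequence :: "(nat \<Rightarrow> real) \<Rightarrow> bool" where
  "weight_sequence M \<longleftrightarrow>
     M 0 = 1 \<and> (\<forall>k. M k > 0) \<and> mono (mu M) \<and> filterlim (mu M) at_top sequentially"

definition non_quasianalytic :: "(nat \<Rightarrow> real) \<Rightarrow> bool" where
  "non_quasianalytic M \<longleftrightarrow> summable (\<lambda>k. 1 / mu M k)"

definition weight_matrix :: "(real \<Rightarrow> nat \<Rightarrow> real) \<Rightarrow> bool" where
  "weight_matrix M \<longleftrightarrow>
     (\<forall>\<alpha>>0. weight_sequence (M \<alpha>)) \<and>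
     (\<forall>\<alpha> \<beta>. 0 < \<alpha> \<longrightarrow> \<alpha> \<le> \<beta> \<longrightarrow> (\<forall>k. M \<alpha> k \<le> M \<beta> k))"

definition nq_weight_matrix :: "(real \<Rightarrow> nat \<Rightarrow> real) \<Rightarrow> bool" where
  "nq_weight_matrix M \<longleftrightarrow> weight_matrix M \<and> (\<forall>\<alpha>>0. non_quasianalytic (M \<alpha>))"

definition tau :: "(nat \<Rightarrow> real) \<Rightarrow> nat \<Rightarrow> real" where
  "tau M k = real k / mu M k + (\<Sum>l. 1 / mu M (l + k))"

definition sigma :: "(nat \<Rightarrow> real) \<Rightarrow> nat \<Rightarrow> real" where
  "sigma M k = (if k = 0 then 1 else tau M 1 * real k / tau M k)"

definition Sder :: "(nat \<Rightarrow> real) \<Rightarrow> nat \<Rightarrow> real" where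
  "Sder M k = (\<Prod>i\<in>{0..k}. sigma M i)"

end

theory Submission
  imports Defs
begin

(*
  Part (i) holds because the tails T_k = sum_{l >= k} 1/mu_l decrease in k.

  For (ii) write sigma_j = tau_1 j / tau_j. Since tau decreases, sigma increases, so
  S_j >= sigma_h^(j+1-h), and for h = j div 2 + 1 this gives S_j^(1/j) >= sigma_h^(1/2).
  It therefore suffices to find beta with (sigma^a_j)^2 <= D sigma^b_h for large j, i.e.
  j^2 tau^b_h <= D' h (tau^a_j)^2. The first condition bounds k / mu^b_k by the tail
  T^a_{2k}; as the first k terms of T^c_k are at most k / mu^c_k, this gives
  tau^c_k <= C tau^a_{2k} for c >= a, b; iterating three times, tau^c_k <= C tau^a_{8k}.
  The second condition gives mu^a_i mu^a_m <= (mu^a_m)^2 <= A mu^b_{2m} for m >= i,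
  which yields tau^b_{2i} <= 2 A (tau^a_i)^2 / i. Both combine for i = h div 2,
  which satisfies 2i <= h and j <= 8i.
*)

definition nq_sequence :: "(nat \<Rightarrow> real) \<Rightarrow> bool" where
  "nq_sequence M \<longleftrightarrow> (\<forall>k. 0 < mu M k) \<and> mono (mu M) \<and> summable (\<lambda>k. 1 / mu M k)"

definition mu_tail :: "(nat \<Rightarrow> real) \<Rightarrow> nat \<Rightarrow> real" where
  "mu_tail M k = (\<Sum>l. 1 / mu M (l + k))"

lemma nq_sequence_if_weight_sequence:
  assumes "weight_sequence M" "non_quasianalytic M"
  shows "nq_sequence M"
proof -
  have "mono (mu M)" and "mu M 0 = 1"
    using assms(1) unfolding weight_sequence_def mu_def by auto
  then have "1 \<le> mu M k" for k using monoD[of "mu M" 0 k] by simp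
  then have "0 < mu M k" for k using less_le_trans[OF zero_less_one] by blast
  then show ?thesis using \<open>mono (mu M)\<close> assms(2) unfolding nq_sequence_def non_quasianalytic_def by blast
qed

lemma nq_sequence_mu_pos: "nq_sequence M \<Longrightarrow> 0 < mu M k"
  unfolding nq_sequence_def by blast

lemma nq_sequence_mu_le: "nq_sequence M \<Longrightarrow> k \<le> m \<Longrightarrow> mu M k \<le> mu M m"
  unfolding nq_sequence_def by (auto dest: monoD)

lemma summable_mu_tail: "nq_sequence M \<Longrightarrow> summable (\<lambda>l. 1 / mu M (l + k))"
  unfolding nq_sequence_def using summable_iff_shift[of "\<lambda>l. 1 / mu M l" k] by auto

lemma mu_tail_nonneg: "nq_sequence M \<Longrightarrow> 0 \<le> mu_tail M k"
  unfolding mu_tail_def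
  by (intro suminf_nonneg summable_mu_tail) (auto intro: less_imp_le nq_sequence_mu_pos)

lemma mu_tail_split:
  assumes "nq_sequence M"
  shows "mu_tail M k = (\<Sum>l<n. 1 / mu M (l + k)) + mu_tail M (n + k)"
  using suminf_split_initial_segment[OF summable_mu_tail[OF assms, of k], of n]
  unfolding mu_tail_def by (simp add: ac_simps)

lemma mu_tail_antimono:
  assumes M: "nq_sequence M" and "k \<le> m"
  shows "mu_tail M m \<le> mu_tail M k"
proof -
  obtain n where m: "m = n + k" using \<open>k \<le> m\<close> by (metis le_add_diff_inverse2)
  have "0 \<le> (\<Sum>l<n. 1 / mu M (l + k))"
    using nq_sequence_mu_pos[OF M] by (intro sum_nonneg) (auto intro: less_imp_le)
  then show ?thesis using mu_tail_split[OF M, of k n] m by simp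
qed

lemma mu_tail_le_of_mu_le:
  assumes "nq_sequence M" "nq_sequence M'" "\<And>k. mu M k \<le> mu M' k"
  shows "mu_tail M' k \<le> mu_tail M k"
  unfolding mu_tail_def using assms
  by (intro suminf_le summable_mu_tail allI divide_left_mono)
    (auto simp: nq_sequence_mu_pos mult_pos_pos)

lemma tau_eq_mu_tail: "tau M k = real k / mu M k + mu_tail M k"
  unfolding tau_def mu_tail_def by simp

lemma mu_tail_le_tau: "nq_sequence M \<Longrightarrow> mu_tail M k \<le> tau M k"
  unfolding tau_eq_mu_tail using nq_sequence_mu_pos[of M k] by simp

lemma of_nat_div_mu_le_tau: "nq_sequence M \<Longrightarrow> real k / mu M k \<le> tau M k"
  unfolding tau_eq_mu_tail using mu_tail_nonneg[of M k] by simp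

lemma tau_pos: "nq_sequence M \<Longrightarrow> 0 < k \<Longrightarrow> 0 < tau M k"
  using of_nat_div_mu_le_tau[of M k] nq_sequence_mu_pos[of M k]
  by (smt (verit) divide_pos_pos of_nat_0_less_iff)

lemma decseq_tau:
  assumes M: "nq_sequence M"
  shows "decseq (tau M)"
proof (rule decseq_SucI)
  fix k
  have "real (Suc k) / mu M (Suc k) \<le> real (Suc k) / mu M k"
    using nq_sequence_mu_pos[OF M] nq_sequence_mu_le[OF M, of k "Suc k"]
    by (intro divide_left_mono) auto
  then show "tau M (Suc k) \<le> tau M k"
    unfolding tau_eq_mu_tail using mu_tail_split[OF M, of k 1] by (simp add: add_divide_distrib)
qed

lemma tau_le: "nq_sequence M \<Longrightarrow> k \<le> m \<Longrightarrow> tau M m \<le> tau M k"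
  using decseq_tau by (blast dest: decseqD)

lemma incseq_sigma:
  assumes M: "nq_sequence M"
  shows "incseq (sigma M)"
proof (rule incseq_SucI)
  fix k
  show "sigma M k \<le> sigma M (Suc k)"
  proof (cases "k = 0")
    case True
    then show ?thesis using tau_pos[OF M, of 1] by (simp add: sigma_def)
  next
    case False
    have "tau M 1 * real k / tau M k \<le> tau M 1 * real (Suc k) / tau M k"
      using tau_pos[OF M] False by (intro divide_right_mono mult_left_mono) (auto intro: less_imp_le)
    also have "\<dots> \<le> tau M 1 * real (Suc k) / tau M (Suc k)"
      using tau_pos[OF M] tau_le[OF M, of k "Suc k"] False
      by (intro divide_left_mono mult_nonneg_nonneg mult_pos_pos) (auto intro: less_imp_le)
    finally show ?thesis using False by (simp add: sigma_def)
  qed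
qed

lemma sigma_ge_1: "nq_sequence M \<Longrightarrow> 1 \<le> sigma M k"
  using incseq_sigma[of M] by (metis le0 monoD sigma_def)

lemma Sder_ge_1: "nq_sequence M \<Longrightarrow> 1 \<le> Sder M j"
  unfolding Sder_def by (intro prod_ge_1 sigma_ge_1)

lemma sigma_power_le_Sder:
  assumes M: "nq_sequence M" and "h \<le> j"
  shows "sigma M h ^ (Suc j - h) \<le> Sder M j"
proof -
  have split: "Sder M j = prod (sigma M) {0..<h} * prod (sigma M) {h..j}"
    unfolding Sder_def using prod.atLeastLessThan_concat[of 0 h "Suc j" "sigma M"] \<open>h \<le> j\<close>
    by (simp add: atLeastLessThanSuc_atLeastAtMost)
  have "sigma M h ^ (Suc j - h) = (\<Prod>i\<in>{h..j}. sigma M h)" by simp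
  also have "\<dots> \<le> prod (sigma M) {h..j}"
    using sigma_ge_1[OF M] incseq_sigma[OF M]
    by (intro prod_mono) (auto intro: order_trans[OF zero_le_one] dest: monoD)
  also have "\<dots> \<le> prod (sigma M) {0..<h} * prod (sigma M) {h..j}"
    using mult_right_mono[OF prod_ge_1 prod_nonneg, of "{0..<h}" "sigma M" "{h..j}" "sigma M"]
      sigma_ge_1[OF M] by (auto intro: order_trans[OF zero_le_one])
  finally show ?thesis using split by simp
qed

lemma sqrt_sigma_half_le_root_Sder:
  assumes M: "nq_sequence M" and "0 < j"
  shows "sqrt (sigma M (j div 2 + 1)) \<le> Sder M j powr (1 / real j)"
proof -
  let ?h = "j div 2 + 1"
  have "sqrt (sigma M ?h) = sigma M ?h powr (1 / 2)"
    using sigma_ge_1[OF M, of ?h] by (simp add: powr_half_sqrt)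
  also have "\<dots> \<le> sigma M ?h powr (real (Suc j - ?h) / real j)"
    using sigma_ge_1[OF M] \<open>0 < j\<close> by (intro powr_mono) (auto simp: field_simps)
  also have "\<dots> = (sigma M ?h ^ (Suc j - ?h)) powr (1 / real j)"
    using sigma_ge_1[OF M, of ?h] by (simp add: powr_realpow[symmetric] powr_powr)
  also have "\<dots> \<le> Sder M j powr (1 / real j)"
    using sigma_ge_1[OF M, of ?h] sigma_power_le_Sder[OF M, of ?h j] \<open>0 < j\<close>
    by (intro powr_mono2) auto
  finally show ?thesis .
qed

lemma tau_le_tau_double:
  assumes Ma: "nq_sequence Ma" and Mb: "nq_sequence Mb" and Mc: "nq_sequence Mc"
    and ac: "\<And>k. mu Ma k \<le> mu Mc k" and bc: "\<And>k. mu Mb k \<le> mu Mc k"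
    and "0 < c" and tail: "c < mu Mb k / real k * mu_tail Ma (2 * k)"
  shows "tau Mc k \<le> (2 / c + 1) * tau Ma (2 * k)"
proof -
  have "0 < k"
    \<comment> \<open>for \<open>k = 0\<close> the right-hand side of \<open>tail\<close> is \<open>0\<close>, as division by zero yields zero\<close>
    using tail \<open>0 < c\<close> by (cases k) auto
  have mu_b: "0 < mu Mb k" and mu_c: "0 < mu Mc k" using Mb Mc by (auto intro: nq_sequence_mu_pos)
  have b_bound: "real k / mu Mb k \<le> mu_tail Ma (2 * k) / c"
    using tail \<open>0 < k\<close> \<open>0 < c\<close> mu_b by (simp add: field_simps)
  have c_le_b: "real k / mu Mc k \<le> real k / mu Mb k"
    using bc mu_b mu_c by (intro divide_left_mono) (auto intro: mult_pos_pos)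
  have "(\<Sum>l<k. 1 / mu Mc (l + k)) \<le> (\<Sum>l<k. 1 / mu Mc k)"
    using Mc mu_c by (intro sum_mono divide_left_mono nq_sequence_mu_le)
      (auto intro: mult_pos_pos nq_sequence_mu_pos)
  then have "mu_tail Mc k \<le> real k / mu Mc k + mu_tail Mc (2 * k)"
    using mu_tail_split[OF Mc, of k k] by (simp add: mult_2)
  also have "mu_tail Mc (2 * k) \<le> mu_tail Ma (2 * k)"
    using mu_tail_le_of_mu_le[OF Ma Mc ac] .
  finally have "tau Mc k \<le> 2 * (mu_tail Ma (2 * k) / c) + mu_tail Ma (2 * k)"
    unfolding tau_eq_mu_tail using b_bound c_le_b by simp
  also have "\<dots> = (2 / c + 1) * mu_tail Ma (2 * k)" by (simp add: field_simps)
  also have "\<dots> \<le> (2 / c + 1) * tau Ma (2 * k)"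
    using mu_tail_le_tau[OF Ma] \<open>0 < c\<close> by (intro mult_left_mono) auto
  finally show ?thesis .
qed

lemma suminf_le_double_suminf_div2:
  fixes f g :: "nat \<Rightarrow> real"
  assumes "summable g" "summable f" "\<And>n. 0 \<le> f n" "\<And>l. g l \<le> f (l div 2)"
  shows "suminf g \<le> 2 * suminf f"
proof (rule suminf_le_const[OF \<open>summable g\<close>])
  fix n
  have pairs: "(\<Sum>l<2 * m. f (l div 2)) = 2 * (\<Sum>i<m. f i)" for m
    by (induction m) (simp_all add: lessThan_Suc)
  have "(\<Sum>l<n. g l) \<le> (\<Sum>l<2 * n. f (l div 2))"
    using assms(3,4) by (intro order_trans[OF sum_mono sum_mono2]) auto
  also have "\<dots> \<le> 2 * suminf f"
    unfolding pairs using sum_le_suminf[OF \<open>summable f\<close>] assms(3) by simp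
  finally show "(\<Sum>l<n. g l) \<le> 2 * suminf f" .
qed

lemma mu_tail_double_le:
  assumes Ma: "nq_sequence Ma" and Mb: "nq_sequence Mb" and "0 < A"
    and square: "\<And>j. (mu Ma j)\<^sup>2 \<le> A * mu Mb (2 * j)"
  shows "mu_tail Mb (2 * i) \<le> 2 * A * mu_tail Ma i / mu Ma i"
proof -
  define f where "f m = A / mu Ma i * (1 / mu Ma (m + i))" for m
  have term_le: "1 / mu Mb (l + 2 * i) \<le> f (l div 2)" for l
  proof -
    let ?q = "l div 2 + i"
    have "mu Ma i * mu Ma ?q \<le> (mu Ma ?q)\<^sup>2"
      using nq_sequence_mu_le[OF Ma, of i ?q] nq_sequence_mu_pos[OF Ma, of ?q]
      by (simp add: power2_eq_square)
    also have "\<dots> \<le> A * mu Mb (2 * ?q)" by (rule square)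
    also have "\<dots> \<le> A * mu Mb (l + 2 * i)"
      using \<open>0 < A\<close> by (intro mult_left_mono nq_sequence_mu_le[OF Mb]) auto
    finally show ?thesis
      unfolding f_def using \<open>0 < A\<close> nq_sequence_mu_pos[OF Ma] nq_sequence_mu_pos[OF Mb, of "l + 2 * i"]
      by (simp add: field_simps)
  qed
  have "mu_tail Mb (2 * i) \<le> 2 * suminf f"
    unfolding mu_tail_def
  proof (rule suminf_le_double_suminf_div2[OF summable_mu_tail[OF Mb] _ _ term_le])
    show "summable f" unfolding f_def by (intro summable_mult summable_mu_tail[OF Ma])
    show "0 \<le> f n" for n
      unfolding f_def using \<open>0 < A\<close> nq_sequence_mu_pos[OF Ma] by (simp add: less_imp_le)
  qed
  also have "suminf f = A / mu Ma i * mu_tail Ma i"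
    unfolding f_def mu_tail_def by (intro suminf_mult summable_mu_tail[OF Ma])
  finally show ?thesis by simp
qed

lemma tau_double_le_square:
  assumes Ma: "nq_sequence Ma" and Mb: "nq_sequence Mb" and "0 < A"
    and square: "\<And>j. (mu Ma j)\<^sup>2 \<le> A * mu Mb (2 * j)" and "0 < i"
  shows "tau Mb (2 * i) \<le> 2 * A * (tau Ma i)\<^sup>2 / real i"
proof -
  have mu_a: "0 < mu Ma i" and mu_b: "0 < mu Mb (2 * i)"
    using Ma Mb by (auto intro: nq_sequence_mu_pos)
  have "real i * (mu Ma i)\<^sup>2 \<le> real i * (A * mu Mb (2 * i))"
    by (intro mult_left_mono square) auto
  then have "real (2 * i) / mu Mb (2 * i) \<le> 2 * A * real i / (mu Ma i)\<^sup>2"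
    using mu_a mu_b by (simp add: field_simps)
  then have "tau Mb (2 * i) \<le> 2 * A * real i / (mu Ma i)\<^sup>2 + 2 * A * mu_tail Ma i / mu Ma i"
    unfolding tau_eq_mu_tail using mu_tail_double_le[OF Ma Mb \<open>0 < A\<close> square] by (rule add_mono)
  also have "\<dots> = 2 * A / mu Ma i * tau Ma i"
    unfolding tau_eq_mu_tail using mu_a by (simp add: field_simps power2_eq_square)
  also have "\<dots> \<le> 2 * A * (tau Ma i / real i) * tau Ma i"
    using of_nat_div_mu_le_tau[OF Ma, of i] tau_pos[OF Ma \<open>0 < i\<close>] \<open>0 < i\<close> \<open>0 < A\<close> mu_a
    by (intro mult_right_mono) (auto simp: field_simps)
  finally show ?thesis by (simp add: power2_eq_square)
qed

lemma tau_square_bound: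
  assumes Ma: "nq_sequence Ma" and Mb: "nq_sequence Mb" and Mc: "nq_sequence Mc" and "0 < A"
    and square: "\<And>j. (mu Mc j)\<^sup>2 \<le> A * mu Mb (2 * j)"
    and compare: "tau Mc i \<le> C * tau Ma j"
    and "0 < i" "2 * i \<le> h" "j \<le> 2 * h" "j \<le> 8 * i"
  shows "tau Mb h * (real j)\<^sup>2 \<le> 32 * A * C\<^sup>2 * real h * (tau Ma j)\<^sup>2"
proof -
  have "tau Mb h \<le> tau Mb (2 * i)" by (rule tau_le[OF Mb \<open>2 * i \<le> h\<close>])
  also have "\<dots> \<le> 2 * A * (tau Mc i)\<^sup>2 / real i"
    by (rule tau_double_le_square[OF Mc Mb \<open>0 < A\<close> square \<open>0 < i\<close>])
  also have "\<dots> \<le> 2 * A * (C * tau Ma j)\<^sup>2 / real i"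
    using compare tau_pos[OF Mc \<open>0 < i\<close>] \<open>0 < A\<close>
    by (intro divide_right_mono mult_left_mono power_mono) auto
  finally have "tau Mb h * (real j)\<^sup>2 \<le> 2 * A * (C * tau Ma j)\<^sup>2 / real i * (real j)\<^sup>2"
    by (rule mult_right_mono) simp
  also have "\<dots> \<le> 2 * A * (C * tau Ma j)\<^sup>2 / real i * (16 * real h * real i)"
  proof -
    have "real j * real j \<le> (2 * real h) * (8 * real i)"
      using \<open>j \<le> 2 * h\<close> \<open>j \<le> 8 * i\<close> by (intro mult_mono) linarith+
    then have "(real j)\<^sup>2 \<le> 16 * real h * real i" by (simp add: power2_eq_square)
    moreover have "0 \<le> 2 * A * (C * tau Ma j)\<^sup>2 / real i" using \<open>0 < A\<close> by simp
    ultimately show ?thesis by (rule mult_left_mono)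
  qed
  also have "\<dots> = 32 * A * C\<^sup>2 * real h * (tau Ma j)\<^sup>2"
    using \<open>0 < i\<close> by (simp add: power_mult_distrib)
  finally show ?thesis .
qed

lemma sigma_square_le_of_tau_le:
  assumes Ma: "nq_sequence Ma" and Mb: "nq_sequence Mb" and "0 < j" "0 < h"
    and "tau Mb h * (real j)\<^sup>2 \<le> D * real h * (tau Ma j)\<^sup>2"
  shows "(sigma Ma j)\<^sup>2 \<le> D * (tau Ma 1)\<^sup>2 / tau Mb 1 * sigma Mb h"
proof -
  have a1: "0 < tau Ma 1" and b1: "0 < tau Mb 1" using Ma Mb by (auto intro: tau_pos)
  have aj: "0 < tau Ma j" and bh: "0 < tau Mb h" using Ma Mb assms(3,4) by (auto intro: tau_pos)
  have "(tau Ma 1)\<^sup>2 * ((real j)\<^sup>2 * tau Mb h) \<le> (tau Ma 1)\<^sup>2 * (D * real h * (tau Ma j)\<^sup>2)"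
    using assms(5) by (intro mult_left_mono) (auto simp: mult.commute)
  then have "(tau Ma 1)\<^sup>2 * (real j)\<^sup>2 / (tau Ma j)\<^sup>2 \<le> (tau Ma 1)\<^sup>2 * (D * real h) / tau Mb h"
    using aj bh by (simp add: divide_simps mult_ac)
  then show ?thesis
    using assms(3,4) a1 b1 by (simp add: sigma_def power_divide power_mult_distrib mult_ac)
qed

lemma sigma_le_root_Sder_of_sigma_square_le:
  assumes Ma: "nq_sequence Ma" and Mb: "nq_sequence Mb"
    and ev: "\<forall>\<^sub>F j in sequentially. (sigma Ma j)\<^sup>2 \<le> D * sigma Mb (j div 2 + 1)"
  shows "\<exists>A\<ge>1. \<forall>j\<ge>1. sigma Ma j \<le> A * Sder Mb j powr (1 / real j)"
proof -
  obtain J where J: "\<And>j. J \<le> j \<Longrightarrow> (sigma Ma j)\<^sup>2 \<le> D * sigma Mb (j div 2 + 1)"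
    using ev unfolding eventually_sequentially by blast
  define A where "A = max (sqrt D) (sigma Ma J)"
  have "1 \<le> A" unfolding A_def using sigma_ge_1[OF Ma] by (simp add: le_max_iff_disj)
  moreover have "sigma Ma j \<le> A * Sder Mb j powr (1 / real j)" if "1 \<le> j" for j
  proof (cases "J \<le> j")
    case True
    have "sigma Ma j \<le> sqrt (D * sigma Mb (j div 2 + 1))"
      using J[OF True] by (rule real_le_rsqrt)
    also have "\<dots> = sqrt D * sqrt (sigma Mb (j div 2 + 1))" by (rule real_sqrt_mult)
    also have "\<dots> \<le> A * Sder Mb j powr (1 / real j)"
      using sqrt_sigma_half_le_root_Sder[OF Mb, of j] \<open>1 \<le> j\<close> \<open>1 \<le> A\<close> order_trans[OF zero_le_one sigma_ge_1[OF Mb]]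
      by (intro mult_mono) (auto simp: A_def)
    finally show ?thesis .
  next
    case False
    have "sigma Ma j \<le> A"
      using False incseqD[OF incseq_sigma[OF Ma], of j J] by (simp add: A_def)
    also have "\<dots> \<le> A * Sder Mb j powr (1 / real j)"
      using \<open>1 \<le> A\<close> Sder_ge_1[OF Mb, of j] by (simp add: ge_one_powr_ge_zero)
    finally show ?thesis .
  qed
  ultimately show ?thesis by blast
qed

definition mu_tail_condition :: "(real \<Rightarrow> nat \<Rightarrow> real) \<Rightarrow> nat \<Rightarrow> bool" where
  "mu_tail_condition M d \<longleftrightarrow>
     (\<forall>\<alpha>>0. \<exists>\<beta>>0. 0 < liminf (\<lambda>k. ereal (mu (M \<beta>) k / real k * mu_tail (M \<alpha>) (d * k))))"

definition mu_square_condition :: "(real \<Rightarrow> nat \<Rightarrow> real) \<Rightarrow> bool" where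
  "mu_square_condition M \<longleftrightarrow>
     (\<forall>\<alpha>>0. \<exists>\<beta>>0. \<exists>A\<ge>1. \<forall>j. (mu (M \<alpha>) j)\<^sup>2 \<le> A * mu (M \<beta>) (2 * j))"

lemma eventually_less_of_liminf_pos:
  assumes "0 < liminf (\<lambda>k. ereal (f k))"
  shows "\<exists>c>0. \<forall>\<^sub>F k in sequentially. c < f k"
proof -
  obtain c where "0 < ereal c" and "ereal c < liminf (\<lambda>k. ereal (f k))"
    using ereal_dense2[OF assms] by blast
  then have "\<forall>\<^sub>F k in sequentially. ereal c < ereal (f k)" by (intro less_LiminfD)
  with \<open>0 < ereal c\<close> show ?thesis by auto
qed

locale nq_matrix_mu_ordered =
  fixes M :: "real \<Rightarrow> nat \<Rightarrow> real"
  assumes nq: "nq_weight_matrix M"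
    and mu_ordered: "\<And>\<alpha> \<beta> k. 0 < \<alpha> \<Longrightarrow> \<alpha> \<le> \<beta> \<Longrightarrow> mu (M \<alpha>) k \<le> mu (M \<beta>) k"
begin

lemma nq_sequence_M: "0 < \<alpha> \<Longrightarrow> nq_sequence (M \<alpha>)"
  using nq unfolding nq_weight_matrix_def weight_matrix_def
  by (simp add: nq_sequence_if_weight_sequence)

lemma mu_tail_condition_mono:
  assumes "d \<le> d'" and "mu_tail_condition M d'"
  shows "mu_tail_condition M d"
  unfolding mu_tail_condition_def
proof (intro allI impI)
  fix \<alpha> :: real assume "0 < \<alpha>"
  then obtain \<beta> where "0 < \<beta>"
    and pos: "0 < liminf (\<lambda>k. ereal (mu (M \<beta>) k / real k * mu_tail (M \<alpha>) (d' * k)))"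
    using assms(2) unfolding mu_tail_condition_def by blast
  have "ereal (mu (M \<beta>) k / real k * mu_tail (M \<alpha>) (d' * k))
      \<le> ereal (mu (M \<beta>) k / real k * mu_tail (M \<alpha>) (d * k))" for k
  proof -
    have "mu_tail (M \<alpha>) (d' * k) \<le> mu_tail (M \<alpha>) (d * k)"
      using \<open>d \<le> d'\<close> by (intro mu_tail_antimono nq_sequence_M \<open>0 < \<alpha>\<close>) simp
    moreover have "0 \<le> mu (M \<beta>) k / real k"
      using nq_sequence_mu_pos[OF nq_sequence_M[OF \<open>0 < \<beta>\<close>], of k] by simp
    ultimately show ?thesis unfolding ereal_less_eq(3) by (rule mult_left_mono)
  qed
  then have "liminf (\<lambda>k. ereal (mu (M \<beta>) k / real k * mu_tail (M \<alpha>) (d' * k)))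
      \<le> liminf (\<lambda>k. ereal (mu (M \<beta>) k / real k * mu_tail (M \<alpha>) (d * k)))"
    by (intro Liminf_mono always_eventually allI)
  then show "\<exists>\<beta>>0. 0 < liminf (\<lambda>k. ereal (mu (M \<beta>) k / real k * mu_tail (M \<alpha>) (d * k)))"
    using \<open>0 < \<beta>\<close> pos by auto
qed

lemma tau_doubling:
  assumes "mu_tail_condition M 2" and "0 < \<alpha>"
  shows "\<exists>\<beta>>0. \<exists>C>0. \<forall>\<^sub>F k in sequentially. tau (M \<beta>) k \<le> C * tau (M \<alpha>) (2 * k)"
proof -
  obtain \<gamma> where "0 < \<gamma>"
    and liminf: "0 < liminf (\<lambda>k. ereal (mu (M \<gamma>) k / real k * mu_tail (M \<alpha>) (2 * k)))"
    using assms unfolding mu_tail_condition_def by blast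
  obtain c where "0 < c" and ev: "\<forall>\<^sub>F k in sequentially. c < mu (M \<gamma>) k / real k * mu_tail (M \<alpha>) (2 * k)"
    using eventually_less_of_liminf_pos[OF liminf] by blast
  define \<beta> where "\<beta> = max \<alpha> \<gamma>"
  have "0 < \<beta>" "\<alpha> \<le> \<beta>" "\<gamma> \<le> \<beta>" using \<open>0 < \<alpha>\<close> unfolding \<beta>_def by auto
  have "\<forall>\<^sub>F k in sequentially. tau (M \<beta>) k \<le> (2 / c + 1) * tau (M \<alpha>) (2 * k)"
    using ev
  proof eventually_elim
    case (elim k)
    show ?case
      by (rule tau_le_tau_double[OF nq_sequence_M nq_sequence_M nq_sequence_M mu_ordered mu_ordered
            \<open>0 < c\<close> elim]) (use \<open>0 < \<alpha>\<close> \<open>0 < \<gamma>\<close> \<open>0 < \<beta>\<close> \<open>\<alpha> \<le> \<beta>\<close> \<open>\<gamma> \<le> \<beta>\<close> in auto)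
  qed
  moreover have "0 < 2 / c + 1" using \<open>0 < c\<close> by (simp add: add_pos_pos)
  ultimately show ?thesis using \<open>0 < \<beta>\<close> by (intro exI[of _ \<beta>] exI[of _ "2 / c + 1"] conjI)
qed

lemma tau_doubling_power:
  assumes "mu_tail_condition M 2" and "0 < \<alpha>"
  shows "\<exists>\<beta>>0. \<exists>C>0. \<forall>\<^sub>F k in sequentially. tau (M \<beta>) k \<le> C * tau (M \<alpha>) (2 ^ n * k)"
  using \<open>0 < \<alpha>\<close>
proof (induction n arbitrary: \<alpha>)
  case 0
  have "\<forall>\<^sub>F k in sequentially. tau (M \<alpha>) k \<le> 1 * tau (M \<alpha>) (2 ^ 0 * k)" by simp
  then show ?case using 0 zero_less_one by blast
next
  case (Suc n)
  obtain \<gamma> C1 where "0 < \<gamma>" "0 < C1"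
    and ev1: "\<forall>\<^sub>F k in sequentially. tau (M \<gamma>) k \<le> C1 * tau (M \<alpha>) (2 * k)"
    using tau_doubling[OF assms(1) Suc.prems] by blast
  obtain \<beta> C2 where "0 < \<beta>" "0 < C2"
    and ev2: "\<forall>\<^sub>F k in sequentially. tau (M \<beta>) k \<le> C2 * tau (M \<gamma>) (2 ^ n * k)"
    using Suc.IH[OF \<open>0 < \<gamma>\<close>] by blast
  have "\<forall>\<^sub>F k in sequentially. tau (M \<gamma>) (2 ^ n * k) \<le> C1 * tau (M \<alpha>) (2 * (2 ^ n * k))"
    using eventually_compose_filterlim[OF ev1 mult_nat_left_at_top[of "2 ^ n"]] by simp
  with ev2 have "\<forall>\<^sub>F k in sequentially. tau (M \<beta>) k \<le> (C2 * C1) * tau (M \<alpha>) (2 ^ Suc n * k)"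
  proof eventually_elim
    case (elim k)
    then have "tau (M \<beta>) k \<le> C2 * (C1 * tau (M \<alpha>) (2 * (2 ^ n * k)))"
      using \<open>0 < C2\<close> by (meson order_trans mult_left_mono less_imp_le)
    then show ?case by (simp add: mult_ac)
  qed
  moreover have "0 < C2 * C1" using \<open>0 < C1\<close> \<open>0 < C2\<close> by simp
  ultimately show ?case using \<open>0 < \<beta>\<close> by blast
qed

lemma sigma_square_le_sigma_half:
  assumes "mu_tail_condition M 2" and "mu_square_condition M" and "0 < \<alpha>"
  shows "\<exists>\<beta>>0. \<exists>D. \<forall>\<^sub>F j in sequentially. (sigma (M \<alpha>) j)\<^sup>2 \<le> D * sigma (M \<beta>) (j div 2 + 1)"
proof -
  obtain \<gamma> C where "0 < \<gamma>" "0 < C"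
    and "\<forall>\<^sub>F k in sequentially. tau (M \<gamma>) k \<le> C * tau (M \<alpha>) (2 ^ 3 * k)"
    using tau_doubling_power[OF assms(1,3)] by blast
  then obtain K where K: "\<And>k. K \<le> k \<Longrightarrow> tau (M \<gamma>) k \<le> C * tau (M \<alpha>) (8 * k)"
    unfolding eventually_sequentially by auto
  obtain \<beta> A where "0 < \<beta>" "1 \<le> A" and square: "\<And>j. (mu (M \<gamma>) j)\<^sup>2 \<le> A * mu (M \<beta>) (2 * j)"
    using assms(2) \<open>0 < \<gamma>\<close> unfolding mu_square_condition_def by blast
  have M\<alpha>: "nq_sequence (M \<alpha>)" and M\<beta>: "nq_sequence (M \<beta>)" and M\<gamma>: "nq_sequence (M \<gamma>)"
    using \<open>0 < \<alpha>\<close> \<open>0 < \<beta>\<close> \<open>0 < \<gamma>\<close> by (auto intro: nq_sequence_M)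
  define D where "D = 32 * A * C\<^sup>2 * (tau (M \<alpha>) 1)\<^sup>2 / tau (M \<beta>) 1"
  have "(sigma (M \<alpha>) j)\<^sup>2 \<le> D * sigma (M \<beta>) (j div 2 + 1)" if "4 * K + 2 \<le> j" for j
  proof -
    define h where "h = j div 2 + 1"
    define i where "i = h div 2"
    have "0 < i" "K \<le> i" "2 * i \<le> h" "j \<le> 8 * i" "j \<le> 2 * h"
      using that unfolding h_def i_def by auto
    have "tau (M \<gamma>) i \<le> C * tau (M \<alpha>) j"
      using K[OF \<open>K \<le> i\<close>] tau_le[OF M\<alpha> \<open>j \<le> 8 * i\<close>] \<open>0 < C\<close>
      by (meson order_trans mult_left_mono less_imp_le)
    with \<open>1 \<le> A\<close> have "tau (M \<beta>) h * (real j)\<^sup>2 \<le> 32 * A * C\<^sup>2 * real h * (tau (M \<alpha>) j)\<^sup>2"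
      by (intro tau_square_bound[OF M\<alpha> M\<beta> M\<gamma> _ square]) (use \<open>0 < i\<close> \<open>2 * i \<le> h\<close> \<open>j \<le> 8 * i\<close> \<open>j \<le> 2 * h\<close> in auto)
    then show ?thesis
      unfolding D_def h_def[symmetric]
      using sigma_square_le_of_tau_le[OF M\<alpha> M\<beta>] that \<open>0 < i\<close> \<open>2 * i \<le> h\<close> by simp
  qed
  then have "\<forall>\<^sub>F j in sequentially. (sigma (M \<alpha>) j)\<^sup>2 \<le> D * sigma (M \<beta>) (j div 2 + 1)"
    unfolding eventually_sequentially by blast
  with \<open>0 < \<beta>\<close> show ?thesis by blast
qed

end

theorem lemma4p7:
  fixes M :: "real \<Rightarrow> nat \<Rightarrow> real"
  assumes nq: "nq_weight_matrix M"
    and mu_mono: "\<And>\<alpha> \<beta>. 0 < \<alpha> \<Longrightarrow> \<alpha> \<le> \<beta> \<Longrightarrow> (\<forall>k. mu (M \<alpha>) k \<le> mu (M \<beta>) k)"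
    and cond1: "\<forall>\<alpha>>0. \<exists>\<beta>>0.
        liminf (\<lambda>k. ereal (mu (M \<beta>) k / real k * (\<Sum>j. 1 / mu (M \<alpha>) (j + 2 * k)))) > 0"
    and cond2: "\<forall>\<alpha>>0. \<exists>\<beta>>0. \<exists>A\<ge>1. \<forall>j. (mu (M \<alpha>) j)\<^sup>2 \<le> A * mu (M \<beta>) (2 * j)"
  shows "(\<forall>\<alpha>>0. \<exists>\<beta>>0.
            liminf (\<lambda>k. ereal (mu (M \<beta>) k / real k * (\<Sum>j. 1 / mu (M \<alpha>) (j + k)))) > 0)
       \<and> (\<forall>\<alpha>>0. \<exists>\<beta>>0. \<exists>A\<ge>1. \<forall>j\<ge>1.
            sigma (M \<alpha>) j \<le> A * (Sder (M \<beta>) j) powr (1 / real j))"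
proof -
  interpret nq_matrix_mu_ordered M
    using nq mu_mono by unfold_locales blast+
  have tail2: "mu_tail_condition M 2"
    using cond1 unfolding mu_tail_condition_def mu_tail_def by simp
  have square: "mu_square_condition M"
    using cond2 unfolding mu_square_condition_def .
  have "mu_tail_condition M 1" by (rule mu_tail_condition_mono[OF _ tail2]) simp
  moreover have "\<exists>\<beta>>0. \<exists>A\<ge>1. \<forall>j\<ge>1. sigma (M \<alpha>) j \<le> A * Sder (M \<beta>) j powr (1 / real j)"
    if "0 < \<alpha>" for \<alpha>
  proof -
    obtain \<beta> D where "0 < \<beta>"
      and "\<forall>\<^sub>F j in sequentially. (sigma (M \<alpha>) j)\<^sup>2 \<le> D * sigma (M \<beta>) (j div 2 + 1)"
      using sigma_square_le_sigma_half[OF tail2 square \<open>0 < \<alpha>\<close>] by blast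
    with sigma_le_root_Sder_of_sigma_square_le[OF nq_sequence_M nq_sequence_M] \<open>0 < \<alpha>\<close>
    show ?thesis by blast
  qed
  ultimately show ?thesis unfolding mu_tail_condition_def mu_tail_def by simp
qed

end
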